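(* Let $N\ge 2$, $P=2$, $L=N+1$. For $\mathbf{b}=[b_1,\dots,b_N]^T\in\{\pm1\}^N$ let $\mathbf{B}$ be the $L\times 2$ matrix whose first column is $[b_1,\dots,b_N,0]^T$ and whose second column is $[0,b_1,\dots,b_N]^T$, so that $$\mathbf{B}^T\mathbf{B}=\begin{bmatrix}N & \sum_{i=1}^{N-1}b_ib_{i+1}\\ \sum_{i=1}^{N-1}b_ib_{i+1} & N\end{bmatrix}.$$ For a $2\times2$ matrix $\mathbf{G}$ and a prefix $\mathbf{b}_{(\ell)}=[b_1,\dots,b_\ell]\in\{\pm1\}^\ell$ ($1\le\ell\le N$), let $\mathcal{A}(\mathbf{b}_{(\ell)}\mid\mathbf{G})$ denote the set of all $\mathbf{b}'\in\{\pm1\}^N$ whose first $\ell$ entries equal $b_1,\dots,b_\ell$ and whose associated matrix $\mathbf{B}'$ satisfies $\mathbf{B}'^T\mathbf{B}'=\mathbf{G}$. Let $m_\ell=(b_1b_2+\cdots+b_{\ell-1}b_\ell)\cdot\mathbf{1}\{\ell>1\}$ (so $m_1=0$), where $\mathbf{1}\{\cdot\}$ is the indicator function. (i) If $N$ is odd and $\mathbf{G}=N\mathbf{I}_2$, then for $1\le\ell\le N$, $$|\mathcal{A}(\mathbf{b}_{(\ell)}\mid\mathbf{G})|=\binom{N-\ell}{(N-\ell-m_\ell)/2}\,\mathbf{1}\{|m_\ell|\le N-\ell\}.$$ (ii) If $N$ is even, and $\mathbf{G}_1=\begin{bmatrix}N&-1\\-1&N\end{bmatrix}$, $\mathbf{G}_2=\begin{bmatrix}N&1\\1&N\end{bmatrix}$,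 then for $\theta\in\{1,2\}$ and $1\le\ell\le N$, $$|\mathcal{A}(\mathbf{b}_{(\ell)}\mid\mathbf{G}_\theta)|=\binom{N-\ell}{(N-\ell+(-1)^\theta-m_\ell)/2}\,\mathbf{1}\{|(-1)^\theta-m_\ell|\le N-\ell\}.$$ Here $\binom{0}{0}=1$, and the right-hand sides are understood to be $0$ whenever the indicator is $0$.
   Context: $\mathbf{I}_2$ is the $2\times 2$ identity matrix. This is the setting of binary $\pm1$ codewords transmitted over a channel of memory order one, where $\mathbf{B}$ is the convolution (Toeplitz) matrix of the codeword. *)

theory Defs
  imports "Jordan_Normal_Form.Matrix"
begin

text \<open>Codewords are int lists of length N with entries in {-1,1}; indices are 0-based,
  so list entry b!i is b_(i+1) of the paper.\<close>

definition pm1_words :: "nat \<Rightarrow> int list set" where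
  "pm1_words N = {b. length b = N \<and> set b \<subseteq> {-1, 1}}"

definition conv_mat :: "int list \<Rightarrow> int mat" where
  "conv_mat b = mat (length b + 1) 2
     (\<lambda>(i, j). if j = 0 then (if i < length b then b ! i else 0)
               else (if i = 0 then 0 else b ! (i - 1)))"

definition compat_set :: "nat \<Rightarrow> int list \<Rightarrow> int mat \<Rightarrow> int list set" where
  "compat_set N p G =
     {b' \<in> pm1_words N. take (length p) b' = p \<and> transpose_mat (conv_mat b') * conv_mat b' = G}"

definition m_val :: "int list \<Rightarrow> int" where
  "m_val p = (if length p > 1 then (\<Sum>i<length p - 1. p ! i * p ! (i + 1)) else 0)"

definition G_theta :: "nat \<Rightarrow> nat \<Rightarrow> int mat" where
  "G_theta N \<theta> = mat 2 2 (\<lambda>(i, j). if i = j then int N else (-1) ^ \<theta>)"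

end

theory Submission
  imports Defs
begin

text \<open>The Gram matrix of conv_mat b has diagonal N and off-diagonal entry the adjacent
  correlation of b. For b = p @ q this correlation is m_val p plus the correlation of
  last p # q, so A(p | G) corresponds to the \<plusminus>1 tails q of length k = N - length p for which
  last p # q has a prescribed correlation s. Branching on the first letter of q gives Pascal's
  recurrence, so these tails are as many as the \<plusminus>1 words of length k with sum s, namely
  k choose (k + s)/2; the parity of N makes (k + s)/2 an integer in each case of the theorem.\<close>

fun adj_corr :: "int list \<Rightarrow> int" where
  "adj_corr (x # y # q) = x * y + adj_corr (y # q)"
| "adj_corr _ = 0"

lemma adj_corr_eq_sum: "adj_corr b = (\<Sum>i<length b - 1. b ! i * b ! (i + 1))"
  by (induction b rule: adj_corr.induct) (simp_all add: sum.lessThan_Suc_shift del: sum.lessThan_Suc)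

lemma m_val_eq_adj_corr: "m_val p = adj_corr p"
  unfolding m_val_def adj_corr_eq_sum by auto

lemma adj_corr_append: "p \<noteq> [] \<Longrightarrow> adj_corr (p @ q) = adj_corr p + adj_corr (last p # q)"
  by (induction p rule: adj_corr.induct) auto

lemma adj_corr_parity:
  "p \<noteq> [] \<Longrightarrow> set p \<subseteq> {-1, 1} \<Longrightarrow> even (adj_corr p + int (length p) + 1)"
proof (induction p rule: adj_corr.induct)
  case (1 x y q)
  then have "odd (x * y)" by auto
  with 1 show ?case by auto
qed auto

definition pm1_sum_count :: "nat \<Rightarrow> int \<Rightarrow> nat" where
  "pm1_sum_count k s =
     (if \<bar>s\<bar> \<le> int k \<and> even (int k + s) then k choose nat ((int k + s) div 2) else 0)"

lemma pm1_sum_count_0: "pm1_sum_count 0 s = (if s = 0 then 1 else 0)"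
  by (auto simp: pm1_sum_count_def)

lemma pm1_sum_count_Suc:
  "pm1_sum_count (Suc k) s = pm1_sum_count k (s - 1) + pm1_sum_count k (s + 1)"
proof (cases "even (int k + 1 + s) \<and> \<bar>s\<bar> \<le> int k + 1")
  case False
  then have "\<not> (\<bar>s\<bar> \<le> int (Suc k) \<and> even (int (Suc k) + s))"
    "\<not> (\<bar>s - 1\<bar> \<le> int k \<and> even (int k + (s - 1)))"
    "\<not> (\<bar>s + 1\<bar> \<le> int k \<and> even (int k + (s + 1)))"
    by presburger+
  then show ?thesis unfolding pm1_sum_count_def by (simp only: if_False)
next
  case True
  define j where "j = nat ((int k + 1 + s) div 2)"
  have j: "int k + 1 + s = 2 * int j" "j \<le> k + 1"
    using True unfolding j_def by (auto elim!: evenE)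
  then have s: "s = 2 * int j - int k - 1" by simp
  have lhs: "pm1_sum_count (Suc k) s = Suc k choose j"
    unfolding pm1_sum_count_def s by auto
  show ?thesis
  proof (cases j)
    case 0
    then show ?thesis unfolding lhs pm1_sum_count_def s by auto
  next
    case (Suc i)
    have "pm1_sum_count k (s - 1) = k choose i"
      unfolding pm1_sum_count_def s using j Suc by auto
    moreover have "pm1_sum_count k (s + 1) = k choose j"
      unfolding pm1_sum_count_def s using j Suc by (auto simp: nat_add_distrib)
    ultimately show ?thesis using lhs Suc by simp
  qed
qed

lemma pm1_sum_count_eq:
  "even (int k + s) \<Longrightarrow>
   pm1_sum_count k s = (if \<bar>s\<bar> \<le> int k then k choose nat ((int k + s) div 2) else 0)"
  by (simp add: pm1_sum_count_def)

lemma card_pm1_tails_adj_corr: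
  assumes "x \<in> {-1, 1}"
  shows "card {q. length q = k \<and> set q \<subseteq> {-1, 1} \<and> adj_corr (x # q) = s} = pm1_sum_count k s"
  using assms
proof (induction k arbitrary: x s)
  case 0
  have "{q. length q = 0 \<and> set q \<subseteq> {-1, 1} \<and> adj_corr (x # q) = s} = (if s = 0 then {[]} else {})"
    by auto
  then show ?case by (simp add: pm1_sum_count_0)
next
  case (Suc k)
  define T where "T y t = {q. length q = k \<and> set q \<subseteq> {-1::int, 1} \<and> adj_corr (y # q) = t}" for y t
  have fin: "finite (T y t)" for y t
    by (rule finite_subset[OF _ finite_lists_length_eq[of "{-1::int, 1}" k]]) (auto simp: T_def)
  have split: "{q. length q = Suc k \<and> set q \<subseteq> {-1, 1} \<and> adj_corr (x # q) = s}
      = Cons 1 ` T 1 (s - x) \<union> Cons (-1) ` T (-1) (s + x)"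
  proof (rule equalityI; rule subsetI)
    fix q assume q: "q \<in> {q. length q = Suc k \<and> set q \<subseteq> {-1, 1} \<and> adj_corr (x # q) = s}"
    then obtain y q' where "q = y # q'" by (cases q) auto
    with q show "q \<in> Cons 1 ` T 1 (s - x) \<union> Cons (-1) ` T (-1) (s + x)"
      by (auto simp: T_def)
  qed (auto simp: T_def)
  have "card (Cons 1 ` T 1 (s - x) \<union> Cons (-1) ` T (-1) (s + x))
      = card (T 1 (s - x)) + card (T (-1) (s + x))"
    by (subst card_Un_disjoint) (auto simp: fin card_image)
  also have "\<dots> = pm1_sum_count k (s - x) + pm1_sum_count k (s + x)"
    using Suc.IH[of 1] Suc.IH[of "-1"] by (simp add: T_def)
  also have "\<dots> = pm1_sum_count (Suc k) s"
    using Suc.prems pm1_sum_count_Suc[of k s] by auto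
  finally show ?case using split by simp
qed

definition toeplitz_gram :: "nat \<Rightarrow> int \<Rightarrow> int mat" where
  "toeplitz_gram N c = mat 2 2 (\<lambda>(i, j). if i = j then int N else c)"

lemma toeplitz_gram_inject: "toeplitz_gram N c = toeplitz_gram N d \<longleftrightarrow> c = d"
proof
  assume "toeplitz_gram N c = toeplitz_gram N d"
  then have "toeplitz_gram N c $$ (0, 1) = toeplitz_gram N d $$ (0, 1)" by simp
  then show "c = d" by (simp add: toeplitz_gram_def)
qed simp

lemma sum_squares_pm1:
  "set b \<subseteq> {-1, 1} \<Longrightarrow> (\<Sum>r<length b. b ! r * b ! r) = int (length b)"
proof -
  assume b: "set b \<subseteq> {-1, 1}"
  have "b ! r * b ! r = 1" if "r < length b" for r
    using b nth_mem[OF that] by auto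
  then show ?thesis by simp
qed

lemma conv_mat_gram:
  assumes b: "set b \<subseteq> {-1, 1}" "b \<noteq> []"
  shows "transpose_mat (conv_mat b) * conv_mat b = toeplitz_gram (length b) (adj_corr b)"
proof -
  define N where "N = length b"
  define E where "E r c = (if c = (0::nat) then (if r < N then b ! r else 0)
                           else (if r = 0 then 0 else b ! (r - 1)))" for r c
  obtain M where M: "N = Suc M" using b(2) by (cases b) (auto simp: N_def)
  have sq: "(\<Sum>r<N. b ! r * b ! r) = int N"
    using sum_squares_pm1[OF b(1)] by (simp add: N_def)
  have corr: "(\<Sum>r<N + 1. E r 0 * E r 1) = adj_corr b"
  proof -
    have "(\<Sum>r<N + 1. E r 0 * E r 1) = (\<Sum>i<Suc M. (if Suc i < N then b ! Suc i else 0) * b ! i)"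
      by (simp add: E_def sum.lessThan_Suc_shift M del: sum.lessThan_Suc)
    also have "\<dots> = (\<Sum>i<M. b ! i * b ! (i + 1))"
      by (simp add: M mult.commute)
    finally show ?thesis by (simp add: adj_corr_eq_sum N_def[symmetric] M)
  qed
  have diag0: "(\<Sum>r<N + 1. E r 0 * E r 0) = int N"
  proof -
    have "(\<Sum>r<N + 1. E r 0 * E r 0) = (\<Sum>r<N. b ! r * b ! r)"
      by (simp add: E_def)
    then show ?thesis using sq by simp
  qed
  have diag1: "(\<Sum>r<N + 1. E r 1 * E r 1) = int N"
    using sq by (simp add: E_def sum.lessThan_Suc_shift del: sum.lessThan_Suc)
  have entries: "(\<Sum>r<N + 1. E r i * E r j) = (if i = j then int N else adj_corr b)"
    if "i < 2" "j < 2" for i j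
    using that diag0 diag1 corr by (auto simp: less_2_cases_iff mult.commute)
  have "conv_mat b $$ (r, c) = E r c" if "r < N + 1" "c < 2" for r c
    using that by (simp add: conv_mat_def E_def N_def)
  then have "(transpose_mat (conv_mat b) * conv_mat b) $$ (i, j) = (\<Sum>r<N + 1. E r i * E r j)"
    if "i < 2" "j < 2" for i j
    using that by (simp add: scalar_prod_def conv_mat_def N_def atLeast0LessThan)
  with entries show ?thesis
    by (intro eq_matI) (auto simp: toeplitz_gram_def conv_mat_def N_def)
qed

lemma compat_set_toeplitz_gram:
  assumes p: "set p \<subseteq> {-1, 1}" "p \<noteq> []" and l: "length p \<le> N"
  shows "compat_set N p (toeplitz_gram N c) = (\<lambda>q. p @ q) `
           {q. length q = N - length p \<and> set q \<subseteq> {-1, 1} \<and> adj_corr (last p # q) = c - m_val p}"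
    (is "_ = _ ` ?T")
proof (rule equalityI; rule subsetI)
  fix b assume "b \<in> compat_set N p (toeplitz_gram N c)"
  then have b: "length b = N" "set b \<subseteq> {-1, 1}" "take (length p) b = p"
    "transpose_mat (conv_mat b) * conv_mat b = toeplitz_gram N c"
    by (auto simp: compat_set_def pm1_words_def)
  define q where "q = drop (length p) b"
  have bq: "b = p @ q" using b(3) unfolding q_def by (metis append_take_drop_id)
  have "adj_corr b = c"
    using b(4) conv_mat_gram[OF b(2)] p(2) bq b(1) by (auto simp: toeplitz_gram_inject)
  then have "adj_corr (last p # q) = c - m_val p"
    unfolding bq adj_corr_append[OF p(2)] by (simp add: m_val_eq_adj_corr)
  moreover have "set q \<subseteq> {-1, 1}" "length q = N - length p"
    using b(1,2) unfolding q_def by (auto dest: in_set_dropD)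
  ultimately show "b \<in> (\<lambda>q. p @ q) ` ?T"
    using bq by blast
next
  fix b assume "b \<in> (\<lambda>q. p @ q) ` ?T"
  then obtain q where q: "b = p @ q" "length q = N - length p" "set q \<subseteq> {-1, 1}"
      "adj_corr (last p # q) = c - m_val p"
    by auto
  have "length b = N" "set b \<subseteq> {-1, 1}" "adj_corr b = c"
    using q l p adj_corr_append[OF p(2), of q] by (auto simp: m_val_eq_adj_corr)
  then show "b \<in> compat_set N p (toeplitz_gram N c)"
    using conv_mat_gram q(1) p(2) by (auto simp: compat_set_def pm1_words_def)
qed

lemma card_compat_set_toeplitz_gram:
  assumes "set p \<subseteq> {-1, 1}" "p \<noteq> []" "length p \<le> N"
  shows "card (compat_set N p (toeplitz_gram N c)) = pm1_sum_count (N - length p) (c - m_val p)"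
proof -
  have "last p \<in> {-1, 1}" using assms(1,2) last_in_set by blast
  then show ?thesis
    unfolding compat_set_toeplitz_gram[OF assms]
    by (subst card_image) (auto simp: inj_on_def card_pm1_tails_adj_corr)
qed

theorem lemma2:
  fixes N :: nat and p :: "int list"
  assumes "N \<ge> 2"
    and "p \<in> pm1_words (length p)"
    and "1 \<le> length p" and "length p \<le> N"
  shows "(odd N \<longrightarrow>
            int (card (compat_set N p (int N \<cdot>\<^sub>m 1\<^sub>m 2))) =
              (if \<bar>m_val p\<bar> \<le> int (N - length p)
               then int ((N - length p) choose nat ((int (N - length p) - m_val p) div 2))
               else 0))
       \<and> (even N \<longrightarrow> (\<forall>\<theta>\<in>{1, 2}.
            int (card (compat_set N p (G_theta N \<theta>))) =
              (if \<bar>(-1) ^ \<theta> - m_val p\<bar> \<le> int (N - length p)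
               then int ((N - length p) choose
                          nat ((int (N - length p) + (-1) ^ \<theta> - m_val p) div 2))
               else 0)))"
proof -
  have p: "set p \<subseteq> {-1, 1}" "p \<noteq> []" "length p \<le> N"
    using assms(2-4) by (auto simp: pm1_words_def)
  have parity: "even (m_val p + int (length p) + 1)"
    using adj_corr_parity[OF p(2,1)] by (simp add: m_val_eq_adj_corr)
  have count: "int (card (compat_set N p (toeplitz_gram N c))) =
      (if \<bar>c - m_val p\<bar> \<le> int (N - length p)
       then int ((N - length p) choose nat ((int (N - length p) + c - m_val p) div 2)) else 0)"
    if "odd N \<longleftrightarrow> even c" for c
  proof -
    have "even (int (N - length p) + (c - m_val p))"
      using parity that p(3) by presburger
    then show ?thesis
      by (simp add: card_compat_set_toeplitz_gram[OF p] pm1_sum_count_eq add_diff_eq)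
  qed
  have "int N \<cdot>\<^sub>m 1\<^sub>m 2 = toeplitz_gram N 0"
    by (rule eq_matI) (auto simp: toeplitz_gram_def)
  moreover have "G_theta N \<theta> = toeplitz_gram N ((-1) ^ \<theta>)" for \<theta>
    by (simp add: G_theta_def toeplitz_gram_def)
  ultimately show ?thesis
    by (simp add: count)
qed

end
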